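(* Let $f,g:\mathbb{N}\to\mathbb{N}$ be functions with $n^{2}=o(f(n))$ and $g(n)=o(n^{3})$ as $n\to\infty$, and let $l:\mathbb{N}\to\mathbb{N}$ satisfy $f(n)\le l(n)\le g(n)$ for every $n\in\mathbb{N}$. Then there exists a function $h:\mathbb{N}\to\mathbb{N}$ with $h(n)\sim \frac{5\,l(n)^{2}}{\alpha_n}$ as $n\to\infty$ such that for every $n\in\mathbb{N}$ $$\frac{l(n)^{2}}{\alpha_n}\le r(l(n))\le h(n).$$
   Context: For $n\in\mathbb{N}$ let $G_n=G(n,3,1)$ be the graph whose vertex set $V_n$ consists of all $3$-element subsets of $\{1,\dots,n\}$, two vertices being adjacent if and only if the corresponding sets share exactly one element. Let $\alpha_n$ denote the independence number of $G(n,3,1)$. For $W\subseteq V_n$ let $r(W)$ be the number of edges of $G(n,3,1)$ with both endpoints in $W$, and for an integer $0\le l\le \binom{n}{3}$ let $r(l)=\min\{r(W): W\subseteq V_n,\ |W|=l\}$ (so $r(l(n))$ is computed in $G(n,3,1)$). *)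

theory Defs
  imports Complex_Main "HOL-Library.Landau_Symbols"
begin

definition V31 :: "nat \<Rightarrow> nat set set" where
  "V31 n = {A. A \<subseteq> {1..n} \<and> card A = 3}"

definition adj31 :: "nat set \<Rightarrow> nat set \<Rightarrow> bool" where
  "adj31 A B \<longleftrightarrow> card (A \<inter> B) = 1"

definition alpha31 :: "nat \<Rightarrow> nat" where
  "alpha31 n = Max {card S | S. S \<subseteq> V31 n \<and> (\<forall>A\<in>S. \<forall>B\<in>S. \<not> adj31 A B)}"

definition rW31 :: "nat set set \<Rightarrow> nat" where
  "rW31 W = card {{A, B} | A B. A \<in> W \<and> B \<in> W \<and> adj31 A B}"

definition r31 :: "nat \<Rightarrow> nat \<Rightarrow> nat" where
  "r31 n l = Min {rW31 W | W. W \<subseteq> V31 n \<and> card W = l}"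

end

theory Submission
  imports Defs "HOL-Analysis.Convex"
begin

text \<open>The independence number lies between n div 3 (disjoint triples) and n: if each point x
  gets weight 1 / deg x, every member T of an independent family gets total weight at least 1,
  because either a point of T lies in no other member, or all members meeting T lie in one
  4-set, so that the points of T have degree at most 3.

  Lower bound: the ordered adjacent pairs of W are counted through their common point. A point
  of degree d is the common point of at least d^2 - 2 n d of them, and since the degrees sum
  to 3 l, Cauchy-Schwarz gives 2 r(W) \<ge> 9 l^2 / n - 6 n l.

  Upper bound: W is taken among the triples inside n div s disjoint blocks of s points, with
  s about sqrt (13 l / (2 n)); a triple then has at most 3 binom(s-1, 2) neighbours.\<close>

lemma mem_V31: "A \<in> V31 n \<longleftrightarrow> A \<subseteq> {1..n} \<and> card A = 3"
  by (simp add: V31_def)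

lemma finite_V31: "finite (V31 n)"
  by (rule finite_subset[of _ "Pow {1..n}"]) (auto simp: V31_def)

lemma adj31_iff: "adj31 A B \<longleftrightarrow> (\<exists>x. A \<inter> B = {x})"
  by (simp add: adj31_def card_1_singleton_iff)

lemma adj31_commute: "adj31 A B \<longleftrightarrow> adj31 B A"
  by (simp add: adj31_def Int_commute)

lemma not_adj31_self: "card A = 3 \<Longrightarrow> \<not> adj31 A A"
  by (simp add: adj31_def)

definition point_degree :: "'a set set \<Rightarrow> 'a \<Rightarrow> nat" where
  "point_degree S x = card {U \<in> S. x \<in> U}"

lemma sum_over_members_eq_point_degree:
  fixes f :: "'a \<Rightarrow> 'b::comm_semiring_1"
  assumes "finite S" "finite X" "\<Union>S \<subseteq> X"
  shows "(\<Sum>U\<in>S. \<Sum>x\<in>U. f x) = (\<Sum>x\<in>X. of_nat (point_degree S x) * f x)"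
proof -
  have "(\<Sum>U\<in>S. \<Sum>x\<in>U. f x) = (\<Sum>U\<in>S. \<Sum>x\<in>X. if x \<in> U then f x else 0)"
  proof (rule sum.cong[OF refl])
    fix U assume "U \<in> S"
    then have "X \<inter> U = U"
      using assms(3) by blast
    then show "(\<Sum>x\<in>U. f x) = (\<Sum>x\<in>X. if x \<in> U then f x else 0)"
      using assms(2) by (simp add: sum.inter_restrict[symmetric])
  qed
  also have "\<dots> = (\<Sum>x\<in>X. \<Sum>U\<in>S. if x \<in> U then f x else 0)"
    by (rule sum.swap)
  also have "\<dots> = (\<Sum>x\<in>X. of_nat (point_degree S x) * f x)"
    using assms(1) by (simp add: point_degree_def sum.If_cases Int_def)
  finally show ?thesis .
qed

lemma card_subsets_containing_le:
  assumes "finite A" "x \<in> A"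
  shows "card {U. U \<subseteq> A \<and> x \<in> U \<and> card U = Suc k} \<le> card (A - {x}) choose k"
proof -
  have "{U. U \<subseteq> A \<and> x \<in> U \<and> card U = Suc k} \<subseteq> insert x ` {P. P \<subseteq> A - {x} \<and> card P = k}"
  proof
    fix U assume "U \<in> {U. U \<subseteq> A \<and> x \<in> U \<and> card U = Suc k}"
    then have "U = insert x (U - {x})" "U - {x} \<subseteq> A - {x}" "card (U - {x}) = k" by auto
    then show "U \<in> insert x ` {P. P \<subseteq> A - {x} \<and> card P = k}" by blast
  qed
  then have "card {U. U \<subseteq> A \<and> x \<in> U \<and> card U = Suc k} \<le> card {P. P \<subseteq> A - {x} \<and> card P = k}"
    using assms(1) by (intro surj_card_le) auto
  also have "\<dots> = card (A - {x}) choose k"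
    using assms(1) by (simp add: n_subsets)
  finally show ?thesis .
qed

lemma r31_le:
  assumes "W \<subseteq> V31 n"
  shows "r31 n (card W) \<le> rW31 W"
  unfolding r31_def using assms
  by (intro Min_le) (auto intro: finite_subset[of _ "rW31 ` Pow (V31 n)"] simp: finite_V31)

lemma r31_attained:
  assumes "W \<subseteq> V31 n"
  obtains W' where "W' \<subseteq> V31 n" "card W' = card W" "r31 n (card W) = rW31 W'"
proof -
  have "finite {rW31 W' | W'. W' \<subseteq> V31 n \<and> card W' = card W}"
    by (rule finite_subset[of _ "rW31 ` Pow (V31 n)"]) (auto simp: finite_V31)
  then have "r31 n (card W) \<in> {rW31 W' | W'. W' \<subseteq> V31 n \<and> card W' = card W}"
    unfolding r31_def using assms by (intro Min_in) auto
  then show thesis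
    using that by blast
qed

section \<open>Independent families of triples\<close>

definition indep31 :: "nat set set \<Rightarrow> bool" where
  "indep31 S \<longleftrightarrow> (\<forall>A\<in>S. \<forall>B\<in>S. \<not> adj31 A B)"

lemma alpha31_eq_Max: "alpha31 n = Max {card S | S. S \<subseteq> V31 n \<and> indep31 S}"
  by (simp add: alpha31_def indep31_def)

lemma nonadjacent_triple_exchange:
  assumes "card T = 3" "card U = 3" "U \<noteq> T" "U \<inter> T \<noteq> {}" "\<not> adj31 U T"
  obtains y z where "y \<in> T" "z \<notin> T" "U = insert z (T - {y})"
proof -
  have fin: "finite T" "finite U"
    using assms(1,2) by (auto intro: card_ge_0_finite)
  have "card (U \<inter> T) \<noteq> 3"
    using assms(1-3) fin by (metis Int_lower1 Int_lower2 card_subset_eq)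
  moreover have "card (U \<inter> T) \<le> 3"
    using assms(2) fin by (metis card_mono inf_le1)
  moreover have "card (U \<inter> T) \<noteq> 0" "card (U \<inter> T) \<noteq> 1"
    using assms(4,5) fin by (auto simp: adj31_def)
  ultimately have two: "card (U \<inter> T) = 2"
    by linarith
  have "card (U - T) = 1"
    using two assms(2) fin by (simp add: card_Diff_subset_Int)
  then obtain z where z: "U - T = {z}"
    by (auto simp: card_1_singleton_iff)
  have "card (T - U) = 1"
    using two assms(1) fin by (simp add: card_Diff_subset_Int Int_commute)
  then obtain y where y: "T - U = {y}"
    by (auto simp: card_1_singleton_iff)
  show thesis
    using z y by (intro that[of y z]) auto
qed

lemma indep31_exchanges_same_point:
  assumes "card T = 3" "indep31 S" "insert z (T - {y}) \<in> S" "insert z' (T - {y'}) \<in> S"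
    and "y \<in> T" "y' \<in> T" "y \<noteq> y'" "z \<notin> T" "z' \<notin> T"
  shows "z = z'"
proof (rule ccontr)
  assume "z \<noteq> z'"
  then have "insert z (T - {y}) \<inter> insert z' (T - {y'}) = T - {y, y'}"
    using assms(8,9) by auto
  moreover have "card (T - {y, y'}) = 1"
    using assms(1,5-7) by (subst card_Diff_subset) (auto intro: card_ge_0_finite)
  ultimately have "adj31 (insert z (T - {y})) (insert z' (T - {y'}))"
    by (simp add: adj31_def)
  then show False
    using assms(2-4) unfolding indep31_def by blast
qed

text \<open>Two members exchanging different points of T bring in the same new point z, and every
  other member meeting T exchanges a point different from one of the two.\<close>
lemma indep31_meeting_members_subset_insert:
  assumes triples: "\<forall>U\<in>S. card U = 3" and indep: "indep31 S" and "T \<in> S"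
    and covered: "\<forall>y\<in>T. \<exists>U\<in>S. y \<in> U \<and> U \<noteq> T"
  obtains z where "\<forall>U\<in>S. U \<inter> T \<noteq> {} \<longrightarrow> U \<subseteq> insert z T"
proof -
  have T: "card T = 3"
    using triples \<open>T \<in> S\<close> by blast
  have exchange: "\<exists>y z. y \<in> T \<and> z \<notin> T \<and> U = insert z (T - {y})"
    if "U \<in> S" "U \<noteq> T" "U \<inter> T \<noteq> {}" for U
    using nonadjacent_triple_exchange[OF T _ that(2,3)] triples indep that(1) \<open>T \<in> S\<close>
    unfolding indep31_def by metis
  obtain a where "a \<in> T"
    using T by (metis card.empty ex_in_conv zero_neq_numeral)
  then obtain U1 where "U1 \<in> S" "a \<in> U1" "U1 \<noteq> T"
    using covered by blast
  then obtain y1 z1 where 1: "y1 \<in> T" "z1 \<notin> T" "insert z1 (T - {y1}) \<in> S"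
    using exchange \<open>a \<in> T\<close> by blast
  then obtain U2 where U2: "U2 \<in> S" "y1 \<in> U2" "U2 \<noteq> T"
    using covered by blast
  then obtain y2 z2 where 2: "y2 \<in> T" "z2 \<notin> T" "U2 = insert z2 (T - {y2})"
    using exchange 1(1) by blast
  have "y1 \<noteq> y2"
    using U2(2) 1(1) 2 by auto
  have "U \<subseteq> insert z1 T" if U: "U \<in> S" "U \<inter> T \<noteq> {}" for U
  proof (cases "U = T")
    case False
    then obtain y z where yz: "y \<in> T" "z \<notin> T" "U = insert z (T - {y})"
      using exchange U by blast
    have "z = z1"
    proof (cases "y = y1")
      case True
      then have "z = z2" "z1 = z2"
        using indep31_exchanges_same_point[OF T indep, of z y z2 y2]
          indep31_exchanges_same_point[OF T indep, of z1 y1 z2 y2] 1 2 U2(1) \<open>y1 \<noteq> y2\<close> yz U(1)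
        by auto
      then show ?thesis
        by simp
    next
      case False
      then show ?thesis
        using indep31_exchanges_same_point[OF T indep, of z y z1 y1] 1 yz U(1) by auto
    qed
    then show ?thesis
      using yz by auto
  qed auto
  then show thesis
    using that by blast
qed

lemma indep31_weight:
  assumes "finite S" "\<forall>U\<in>S. card U = 3" "indep31 S" "T \<in> S"
  shows "1 \<le> (\<Sum>x\<in>T. 1 / real (point_degree S x))"
proof -
  have T: "card T = 3" "finite T"
    using assms(2,4) by (auto intro: card_ge_0_finite)
  show ?thesis
  proof (cases "\<forall>y\<in>T. \<exists>U\<in>S. y \<in> U \<and> U \<noteq> T")
    case True
    then obtain z where z: "\<forall>U\<in>S. U \<inter> T \<noteq> {} \<longrightarrow> U \<subseteq> insert z T"
      using indep31_meeting_members_subset_insert assms(2-4) by blast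
    have "point_degree S x \<le> 3" if "x \<in> T" for x
    proof -
      have "point_degree S x \<le> card {U. U \<subseteq> insert z T \<and> x \<in> U \<and> card U = Suc 2}"
        unfolding point_degree_def using z assms(2) that T(2)
        by (intro card_mono) (auto simp: finite_subset[of _ "Pow (insert z T)"])
      also have "\<dots> \<le> card (insert z T - {x}) choose 2"
        using T(2) that by (intro card_subsets_containing_le) auto
      also have "\<dots> \<le> 3 choose 2"
        using T that by (intro binomial_right_mono) (auto simp: card_insert_if)
      finally show ?thesis
        by (simp add: choose_two)
    qed
    moreover have "0 < point_degree S x" if "x \<in> T" for x
      unfolding point_degree_def using assms(1,4) that by (auto simp: card_gt_0_iff)
    ultimately have "(\<Sum>x\<in>T. 1 / 3) \<le> (\<Sum>x\<in>T. 1 / real (point_degree S x))"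
      by (intro sum_mono) (simp add: frac_le)
    then show ?thesis
      using T by simp
  next
    case False
    then obtain y where y: "y \<in> T" "\<forall>U\<in>S. y \<in> U \<longrightarrow> U = T"
      by blast
    then have "{U \<in> S. y \<in> U} = {T}"
      using assms(4) by blast
    then have "point_degree S y = 1"
      by (simp add: point_degree_def)
    then show ?thesis
      using member_le_sum[of y T "\<lambda>x. 1 / real (point_degree S x)"] y(1) T(2) by simp
  qed
qed

lemma indep31_card_le:
  assumes "finite S" "\<forall>U\<in>S. card U = 3" "indep31 S"
  shows "card S \<le> card (\<Union>S)"
proof -
  have fin: "finite (\<Union>S)"
    using assms(1,2) by (metis card.infinite finite_Union zero_neq_numeral)
  have "real (card S) \<le> (\<Sum>T\<in>S. \<Sum>x\<in>T. 1 / real (point_degree S x))"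
    using sum_mono[OF indep31_weight[OF assms]] by simp
  also have "\<dots> = (\<Sum>x\<in>\<Union>S. real (point_degree S x) * (1 / real (point_degree S x)))"
    using assms(1) fin by (rule sum_over_members_eq_point_degree) simp
  also have "\<dots> = (\<Sum>x\<in>\<Union>S. 1)"
    using assms(1) by (intro sum.cong refl) (auto simp: point_degree_def card_gt_0_iff)
  finally show ?thesis
    by simp
qed

lemma finite_indep31_sizes: "finite {card S | S. S \<subseteq> V31 n \<and> indep31 S}"
  by (rule finite_subset[of _ "card ` Pow (V31 n)"]) (auto simp: finite_V31)

lemma alpha31_le: "alpha31 n \<le> n"
proof -
  have bound: "card S \<le> n" if "S \<subseteq> V31 n" "indep31 S" for S
  proof -
    have "card S \<le> card (\<Union>S)"
      using that finite_subset[OF that(1) finite_V31] by (intro indep31_card_le) (auto simp: mem_V31)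
    also have "\<dots> \<le> card {1..n}"
      using that(1) by (intro card_mono) (auto simp: mem_V31 subset_iff)
    finally show ?thesis
      by simp
  qed
  have "{} \<subseteq> V31 n \<and> indep31 {}"
    by (simp add: indep31_def)
  then show ?thesis
    unfolding alpha31_eq_Max using bound by (intro Max.boundedI finite_indep31_sizes) blast+
qed

definition block :: "nat \<Rightarrow> nat \<Rightarrow> nat set" where
  "block s i = {i * s <.. i * s + s}"

lemma card_block [simp]: "card (block s i) = s"
  by (simp add: block_def)

lemma finite_block [simp]: "finite (block s i)"
  by (simp add: block_def)

lemma disjoint_blocks:
  assumes "i \<noteq> j"
  shows "block s i \<inter> block s j = {}"
proof -
  have "i * s + s \<le> j * s" if "i < j" for i j :: nat
    using that by (metis Suc_leI mult_Suc mult_le_mono1 add.commute)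
  then show ?thesis
    using assms unfolding block_def by (cases "i < j") (auto simp: not_less_iff_gr_or_eq)
qed

lemma block_subset_range:
  assumes "i < n div s"
  shows "block s i \<subseteq> {1..n}"
proof -
  have "i * s + s \<le> n div s * s"
    using assms by (metis Suc_leI mult_Suc mult_le_mono1 add.commute)
  also have "\<dots> \<le> n"
    by simp
  finally show ?thesis
    unfolding block_def by auto
qed

lemma adj31_same_block:
  assumes "A \<subseteq> block s i" "B \<subseteq> block s j" "adj31 A B"
  shows "i = j"
proof (rule ccontr)
  assume "i \<noteq> j"
  then have "A \<inter> B = {}"
    using assms(1,2) disjoint_blocks[of i j s] by blast
  then show False
    using assms(3) by (simp add: adj31_def)
qed

lemma alpha31_ge: "n div 3 \<le> alpha31 n"
proof -
  have "\<not> adj31 (block 3 i) (block 3 j)" for i j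
    using disjoint_blocks[of i j 3] by (cases "i = j") (simp_all add: adj31_def)
  then have "indep31 (block 3 ` {..<n div 3})"
    by (auto simp: indep31_def)
  moreover have "inj_on (block 3) {..<n div 3}"
    using disjoint_blocks[of _ _ 3] card_block[of 3]
    by (intro inj_onI) (metis Int_absorb card.empty zero_neq_numeral)
  then have "card (block 3 ` {..<n div 3}) = n div 3"
    by (simp add: card_image)
  moreover have "block 3 ` {..<n div 3} \<subseteq> V31 n"
  proof (rule image_subsetI)
    fix i assume "i \<in> {..<n div 3}"
    then show "block 3 i \<in> V31 n"
      using block_subset_range[of i n 3] by (simp add: mem_V31)
  qed
  ultimately have "n div 3 \<in> {card S | S. S \<subseteq> V31 n \<and> indep31 S}"
    by (intro CollectI exI[where x = "block 3 ` {..<n div 3}"]) simp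
  then show ?thesis
    unfolding alpha31_eq_Max by (rule Max_ge[OF finite_indep31_sizes])
qed

section \<open>Lower bound on r(l)\<close>

lemma card_ordered_pairs_eq_twice_edges:
  assumes "finite W" "\<And>A B. R A B \<Longrightarrow> R B A" "\<forall>A\<in>W. \<not> R A A"
  shows "card {(A, B) \<in> W \<times> W. R A B} = 2 * card {{A, B} | A B. A \<in> W \<and> B \<in> W \<and> R A B}"
proof -
  let ?P = "{(A, B) \<in> W \<times> W. R A B}"
  let ?edge = "\<lambda>(A, B). {A, B}"
  have fin: "finite ?P"
    using assms(1) by (auto intro: finite_subset[of _ "W \<times> W"])
  have fibre: "card {p \<in> ?P. ?edge p = e} = 2" if e: "e \<in> ?edge ` ?P" for e
  proof -
    obtain A B where AB: "(A, B) \<in> ?P" "e = {A, B}"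
      using e by auto
    then have "{p \<in> ?P. ?edge p = e} = {(A, B), (B, A)}"
      using assms(2) by (auto simp: doubleton_eq_iff)
    moreover have "A \<noteq> B"
      using assms(3) AB(1) by auto
    ultimately show ?thesis
      by simp
  qed
  have "card ?P = (\<Sum>e\<in>?edge ` ?P. card {p \<in> ?P. ?edge p = e})"
    unfolding card_eq_sum using fin by (rule sum.image_gen)
  also have "\<dots> = 2 * card (?edge ` ?P)"
    using fibre by simp
  also have "?edge ` ?P = {{A, B} | A B. A \<in> W \<and> B \<in> W \<and> R A B}"
    by auto
  finally show ?thesis .
qed

lemma card_adj31_pairs:
  assumes "W \<subseteq> V31 n"
  shows "card {(A, B) \<in> W \<times> W. adj31 A B} = 2 * rW31 W"
  unfolding rW31_def using assms finite_subset[OF assms finite_V31]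
  by (intro card_ordered_pairs_eq_twice_edges) (auto simp: adj31_commute not_adj31_self mem_V31)

lemma card_adj31_pairs_eq_sum:
  assumes "W \<subseteq> V31 n"
  shows "card {(A, B) \<in> W \<times> W. adj31 A B} = (\<Sum>x\<in>{1..n}. card {(A, B) \<in> W \<times> W. A \<inter> B = {x}})"
proof -
  let ?meet = "\<lambda>x. {(A, B) \<in> W \<times> W. A \<inter> B = {x}}"
  have fin: "finite W"
    using assms finite_V31 by (rule finite_subset)
  have "{(A, B) \<in> W \<times> W. adj31 A B} = (\<Union>x\<in>{1..n}. ?meet x)"
    using assms by (fastforce simp: adj31_iff mem_V31)
  also have "card \<dots> = (\<Sum>x\<in>{1..n}. card (?meet x))"
    using fin by (intro card_UN_disjoint) (auto intro: finite_subset[of _ "W \<times> W"])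
  finally show ?thesis .
qed

lemma card_triples_meeting_beyond_point:
  assumes "A \<in> V31 n" "x \<in> A"
  shows "card {B \<in> V31 n. x \<in> B \<and> A \<inter> B \<noteq> {x}} \<le> 2 * n"
proof -
  have A: "finite A" "card A = 3"
    using assms(1) by (auto simp: mem_V31 intro: card_ge_0_finite)
  have "{B \<in> V31 n. x \<in> B \<and> A \<inter> B \<noteq> {x}} \<subseteq> (\<lambda>(y, z). {x, y, z}) ` ((A - {x}) \<times> {1..n})"
  proof
    fix B assume B: "B \<in> {B \<in> V31 n. x \<in> B \<and> A \<inter> B \<noteq> {x}}"
    then obtain y where y: "y \<in> A \<inter> B" "y \<noteq> x"
      using assms(2) by blast
    have "card (B - {x, y}) = 1"
      using B y by (subst card_Diff_subset) (auto simp: mem_V31 intro: card_ge_0_finite)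
    then obtain z where z: "B - {x, y} = {z}"
      by (auto simp: card_1_singleton_iff)
    then have "B = {x, y, z}"
      using B y by blast
    moreover have "z \<in> {1..n}"
      using B z by (auto simp: mem_V31)
    ultimately show "B \<in> (\<lambda>(y, z). {x, y, z}) ` ((A - {x}) \<times> {1..n})"
      using y by force
  qed
  then have "card {B \<in> V31 n. x \<in> B \<and> A \<inter> B \<noteq> {x}} \<le> card ((A - {x}) \<times> {1..n})"
    using A(1) by (intro surj_card_le) auto
  also have "\<dots> = 2 * n"
    using A assms(2) by (simp add: card_cartesian_product)
  finally show ?thesis .
qed

lemma card_pairs_meeting_in_point:
  assumes "W \<subseteq> V31 n"
  shows "point_degree W x * point_degree W x
           \<le> card {(A, B) \<in> W \<times> W. A \<inter> B = {x}} + 2 * n * point_degree W x"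
proof -
  let ?Wx = "{A \<in> W. x \<in> A}"
  let ?far = "\<lambda>A. {B \<in> V31 n. x \<in> B \<and> A \<inter> B \<noteq> {x}}"
  have fin: "finite W"
    using assms finite_V31 by (rule finite_subset)
  have "?Wx \<times> ?Wx \<subseteq> {(A, B) \<in> W \<times> W. A \<inter> B = {x}} \<union> Sigma ?Wx ?far"
    using assms by blast
  then have "card (?Wx \<times> ?Wx) \<le> card ({(A, B) \<in> W \<times> W. A \<inter> B = {x}} \<union> Sigma ?Wx ?far)"
    using fin finite_V31 by (intro card_mono) (auto intro: finite_subset[of _ "W \<times> W"])
  also have "\<dots> \<le> card {(A, B) \<in> W \<times> W. A \<inter> B = {x}} + card (Sigma ?Wx ?far)"
    by (rule card_Un_le)
  also have "card (Sigma ?Wx ?far) = (\<Sum>A\<in>?Wx. card (?far A))"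
    using fin finite_V31 by simp
  also have "\<dots> \<le> (\<Sum>A\<in>?Wx. 2 * n)"
    using assms by (intro sum_mono card_triples_meeting_beyond_point) auto
  finally show ?thesis
    by (simp add: point_degree_def card_cartesian_product mult.commute)
qed

lemma sum_point_degree_V31:
  assumes "W \<subseteq> V31 n"
  shows "(\<Sum>x\<in>{1..n}. point_degree W x) = 3 * card W"
proof -
  have "(\<Sum>U\<in>W. \<Sum>x\<in>U. 1) = (\<Sum>x\<in>{1..n}. of_nat (point_degree W x) * (1::nat))"
    using assms finite_subset[OF assms finite_V31]
    by (intro sum_over_members_eq_point_degree) (auto simp: mem_V31 subset_iff)
  moreover have "(\<Sum>U\<in>W. \<Sum>x\<in>U. 1) = 3 * card W"
    using assms by (simp add: mem_V31 subset_iff)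
  ultimately show ?thesis
    by simp
qed

lemma rW31_lower_bound:
  assumes "W \<subseteq> V31 n" "0 < n"
  shows "9 * real (card W) ^ 2 / real n \<le> 2 * real (rW31 W) + 6 * real n * real (card W)"
proof -
  let ?d = "\<lambda>x. real (point_degree W x)"
  let ?meet = "\<lambda>x. {(A, B) \<in> W \<times> W. A \<inter> B = {x}}"
  have degree_sum: "(\<Sum>x\<in>{1..n}. ?d x) = 3 * real (card W)"
    using arg_cong[where f = real, OF sum_point_degree_V31[OF assms(1)]] by simp
  have "(\<Sum>x\<in>{1..n}. ?d x * ?d x) \<le> (\<Sum>x\<in>{1..n}. real (card (?meet x)) + 2 * n * ?d x)"
    using of_nat_mono[where 'a = real, OF card_pairs_meeting_in_point[OF assms(1)]]
    by (intro sum_mono) simp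
  also have "\<dots> = 2 * real (rW31 W) + 2 * n * (3 * real (card W))"
  proof -
    have "(\<Sum>x\<in>{1..n}. card (?meet x)) = 2 * rW31 W"
      using card_adj31_pairs_eq_sum[OF assms(1)] card_adj31_pairs[OF assms(1)] by simp
    then have "(\<Sum>x\<in>{1..n}. real (card (?meet x))) = 2 * real (rW31 W)"
      using arg_cong[where f = real] by fastforce
    then show ?thesis
      using degree_sum by (simp add: sum.distrib flip: sum_distrib_left)
  qed
  finally have "(\<Sum>x\<in>{1..n}. (?d x)\<^sup>2) \<le> 2 * real (rW31 W) + 6 * n * real (card W)"
    by (simp add: power2_eq_square)
  moreover have "(3 * real (card W))\<^sup>2 \<le> (\<Sum>x\<in>{1..n}. (?d x)\<^sup>2) * n"
    using sum_squared_le_sum_of_squares[of ?d "{1..n}"] unfolding degree_sum by simp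
  ultimately have "(3 * real (card W))\<^sup>2 \<le> (2 * real (rW31 W) + 6 * n * real (card W)) * n"
    by (meson mult_right_mono of_nat_0_le_iff order.trans)
  then show ?thesis
    using assms(2) by (simp add: pos_divide_le_eq power_mult_distrib)
qed

section \<open>Upper bound on r(l)\<close>

lemma card_adj31_in_block:
  assumes "finite G" "A \<subseteq> G" "card A = 3"
  shows "card {B. B \<subseteq> G \<and> card B = 3 \<and> adj31 A B} \<le> 3 * (card G - 1 choose 2)"
proof -
  have fin: "finite A"
    using assms(1,2) by (rule finite_subset[rotated])
  have "{B. B \<subseteq> G \<and> card B = 3 \<and> adj31 A B} \<subseteq> (\<Union>a\<in>A. {B. B \<subseteq> G \<and> a \<in> B \<and> card B = Suc 2})"
    by (auto simp: adj31_iff)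
  then have "card {B. B \<subseteq> G \<and> card B = 3 \<and> adj31 A B}
               \<le> card (\<Union>a\<in>A. {B. B \<subseteq> G \<and> a \<in> B \<and> card B = Suc 2})"
    using assms(1) fin by (intro card_mono) (auto intro: finite_subset[of _ "Pow G"])
  also have "\<dots> \<le> (\<Sum>a\<in>A. card {B. B \<subseteq> G \<and> a \<in> B \<and> card B = Suc 2})"
    by (rule card_UN_le[OF fin])
  also have "\<dots> \<le> (\<Sum>a\<in>A. card G - 1 choose 2)"
  proof (rule sum_mono)
    fix a assume "a \<in> A"
    then show "card {B. B \<subseteq> G \<and> a \<in> B \<and> card B = Suc 2} \<le> card G - 1 choose 2"
      using card_subsets_containing_le[OF assms(1), of a 2] assms(1,2) by (auto simp: card_Diff_singleton)
  qed
  finally show ?thesis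
    using assms(3) by simp
qed

lemma rW31_block_family:
  assumes "l \<le> n div s * (s choose 3)"
  obtains W where "W \<subseteq> V31 n" "card W = l" "2 * rW31 W \<le> 3 * l * (s - 1 choose 2)"
proof -
  define T where "T i = {A. A \<subseteq> block s i \<and> card A = 3}" for i
  have T_disjoint: "T i \<inter> T j = {}" if "i \<noteq> j" for i j
  proof (rule equals0I)
    fix A assume "A \<in> T i \<inter> T j"
    then have "A \<subseteq> block s i \<inter> block s j" "card A = 3"
      unfolding T_def by auto
    then show False
      using disjoint_blocks[OF \<open>i \<noteq> j\<close>] by simp
  qed
  have "card (\<Union>i<n div s. T i) = n div s * (s choose 3)"
    using T_disjoint by (subst card_UN_disjoint) (auto simp: T_def n_subsets)
  then obtain W where W: "W \<subseteq> (\<Union>i<n div s. T i)" "card W = l"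
    using assms by (metis obtain_subset_with_card_n)
  have WV: "W \<subseteq> V31 n"
    using W(1) block_subset_range unfolding T_def V31_def by blast
  have neighbours: "card {B \<in> W. adj31 A B} \<le> 3 * (s - 1 choose 2)" if "A \<in> W" for A
  proof -
    obtain i where i: "A \<subseteq> block s i" "card A = 3"
      using W(1) \<open>A \<in> W\<close> unfolding T_def by blast
    have "{B \<in> W. adj31 A B} \<subseteq> {B. B \<subseteq> block s i \<and> card B = 3 \<and> adj31 A B}"
      using W(1) adj31_same_block[OF i(1)] unfolding T_def by blast
    then have "card {B \<in> W. adj31 A B} \<le> card {B. B \<subseteq> block s i \<and> card B = 3 \<and> adj31 A B}"
      by (intro card_mono) (auto intro: finite_subset[of _ "Pow (block s i)"])
    also have "\<dots> \<le> 3 * (s - 1 choose 2)"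
      using card_adj31_in_block[OF finite_block i] by simp
    finally show ?thesis .
  qed
  have "{(A, B) \<in> W \<times> W. adj31 A B} = Sigma W (\<lambda>A. {B \<in> W. adj31 A B})"
    by auto
  then have "2 * rW31 W = (\<Sum>A\<in>W. card {B \<in> W. adj31 A B})"
    using card_adj31_pairs[OF WV] finite_subset[OF WV finite_V31] by simp
  also have "\<dots> \<le> (\<Sum>A\<in>W. 3 * (s - 1 choose 2))"
    by (rule sum_mono) (rule neighbours)
  finally show thesis
    using that WV W(2) by (simp add: mult.assoc)
qed

lemma real_choose_two: "real (s choose 2) = real s * (real s - 1) / 2"
  by (induction s) (simp_all add: numeral_2_eq_2 field_simps)

lemma real_choose_three: "real (s choose 3) = real s * (real s - 1) * (real s - 2) / 6"
proof (induction s)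
  case (Suc s)
  have "Suc s choose 3 = (s choose 2) + (s choose 3)"
    by (simp add: numeral_3_eq_3 numeral_2_eq_2)
  then show ?case
    using Suc real_choose_two[of s] by (simp add: field_simps)
qed simp

lemma ceiling_square_le:
  fixes t :: real
  assumes "200 \<le> t"
  shows "(real (nat \<lceil>t\<rceil>))\<^sup>2 \<le> 40 / 39 * t\<^sup>2"
proof -
  have "real (nat \<lceil>t\<rceil>) \<le> t + 1"
    using assms by linarith
  then have "(real (nat \<lceil>t\<rceil>))\<^sup>2 \<le> (t + 1)\<^sup>2"
    by (intro power_mono) auto
  also have "\<dots> \<le> 40 / 39 * t\<^sup>2"
  proof -
    have "200 * t \<le> t * t"
      using assms by (intro mult_right_mono) auto
    moreover have "(t + 1)\<^sup>2 = t * t + 2 * t + 1" "t\<^sup>2 = t * t"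
      by (simp_all add: power2_eq_square algebra_simps)
    ultimately show ?thesis
      using assms by linarith
  qed
  finally show ?thesis .
qed

lemma blocks_have_room:
  fixes t :: real
  assumes "200 \<le> t" "t \<le> real n / 100" "real n * t\<^sup>2 = 13 / 2 * real l"
  shows "l \<le> n div nat \<lceil>t\<rceil> * (nat \<lceil>t\<rceil> choose 3)"
proof -
  define s where "s = nat \<lceil>t\<rceil>"
  have s: "t \<le> real s" "real s \<le> t + 1" "0 < s"
    unfolding s_def using assms(1) by linarith+
  have "n \<le> n div s * s + s"
    using div_mult_mod_eq[of n s] mod_less_divisor[OF s(3), of n] by linarith
  then have "real n - real s \<le> real (n div s) * real s"
    using of_nat_mono[where 'a = real] by fastforce
  have "49 / 50 * real n \<le> real n - real s" "99 / 100 * t \<le> real s - 2"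
    using assms(1,2) s(1,2) by linarith+
  then have "49 / 50 * real n * (99 / 100 * t * (99 / 100 * t))
               \<le> (real n - real s) * ((real s - 1) * (real s - 2))"
    using assms(1) by (intro mult_mono) auto
  also have "\<dots> \<le> real (n div s) * real s * ((real s - 1) * (real s - 2))"
    using \<open>real n - real s \<le> real (n div s) * real s\<close> s(1) assms(1) by (intro mult_right_mono) auto
  also have "\<dots> = 6 * real (n div s * (s choose 3))"
    by (simp add: real_choose_three)
  finally have "49 / 50 * (99 / 100) * (99 / 100) * (real n * t\<^sup>2) \<le> 6 * real (n div s * (s choose 3))"
    by (simp add: power2_eq_square algebra_simps)
  then have "real l \<le> real (n div s * (s choose 3))"
    unfolding assms(3) by simp
  then show ?thesis
    unfolding s_def by (simp only: of_nat_le_iff)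
qed

text \<open>The block size is the ceiling of t = sqrt (13 l / (2 n)): the constant 13/2 lies between
  the 6 needed for the blocks to have room for l triples and the 20/3 allowed by the final
  constant 5.\<close>
lemma block_size_exists:
  fixes n l :: nat
  assumes "200 \<le> n" "10000 * n\<^sup>2 \<le> l" "100000 * l \<le> n ^ 3"
  obtains s where "l \<le> n div s * (s choose 3)" "3 * n * s\<^sup>2 \<le> 20 * l"
proof -
  define N L where "N = real n" and "L = real l"
  have "real (10000 * n\<^sup>2) \<le> real l" "real (100000 * l) \<le> real (n ^ 3)"
    using assms(2,3) by (simp_all only: of_nat_le_iff)
  then have N: "200 \<le> N" and L: "10000 * N\<^sup>2 \<le> L" "100000 * L \<le> N ^ 3"
    using assms(1) unfolding N_def L_def by simp_all
  define t where "t = sqrt (13 * L / (2 * N))"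
  have t2: "N * t\<^sup>2 = 13 / 2 * L"
    unfolding t_def using N by (subst real_sqrt_pow2) (auto simp: L_def)
  have "200 * N \<le> N * N"
    using N by (intro mult_right_mono) auto
  then have "200\<^sup>2 * N \<le> N * t\<^sup>2"
    using L(1) N unfolding t2 unfolding power2_eq_square by linarith
  then have "200\<^sup>2 \<le> t\<^sup>2"
    using N by simp
  then have t: "200 \<le> t"
    by (rule power2_le_imp_le) (use N in \<open>simp add: t_def L_def\<close>)
  have "N * t\<^sup>2 \<le> N ^ 3 / 10000"
    unfolding t2 using L(2) by (simp add: L_def)
  also have "\<dots> = N * (N / 100)\<^sup>2"
    by (simp add: power2_eq_square power3_eq_cube)
  finally have "t\<^sup>2 \<le> (N / 100)\<^sup>2"
    using N by simp
  then have "t \<le> N / 100"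
    by (rule power2_le_imp_le) (use N in simp)
  then have room: "l \<le> n div nat \<lceil>t\<rceil> * (nat \<lceil>t\<rceil> choose 3)"
    using t t2 by (intro blocks_have_room) (auto simp: N_def L_def)
  have "3 * N * (real (nat \<lceil>t\<rceil>))\<^sup>2 \<le> 3 * N * (40 / 39 * t\<^sup>2)"
    using ceiling_square_le[OF t] N by (intro mult_left_mono) auto
  also have "\<dots> = 20 * L"
    using t2 by (simp add: algebra_simps)
  finally have "real (3 * n * (nat \<lceil>t\<rceil>)\<^sup>2) \<le> real (20 * l)"
    unfolding N_def L_def by simp
  then have "3 * n * (nat \<lceil>t\<rceil>)\<^sup>2 \<le> 20 * l"
    by (simp only: of_nat_le_iff)
  then show thesis
    using room that by blast
qed

section \<open>Comparison with l^2 / alpha n\<close>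

lemma r31_upper_bound:
  assumes "0 < n" "l \<le> n div s * (s choose 3)" "3 * n * s\<^sup>2 \<le> 20 * l"
  shows "real (r31 n l) \<le> 5 * real l ^ 2 / real n"
proof -
  obtain W where W: "W \<subseteq> V31 n" "card W = l" "2 * rW31 W \<le> 3 * l * (s - 1 choose 2)"
    using rW31_block_family[OF assms(2)] .
  have "2 * (s - 1 choose 2) \<le> (s - 1) * (s - 1 - 1)"
    by (simp add: choose_two)
  also have "\<dots> \<le> s\<^sup>2"
    by (simp add: power2_eq_square mult_le_mono)
  finally have choose_le: "2 * (s - 1 choose 2) \<le> s\<^sup>2" .
  have "4 * n * rW31 W = 2 * n * (2 * rW31 W)"
    by simp
  also have "\<dots> \<le> 2 * n * (3 * l * (s - 1 choose 2))"
    using W(3) by simp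
  also have "\<dots> = l * n * 3 * (2 * (s - 1 choose 2))"
    by simp
  also have "\<dots> \<le> l * (3 * n * s\<^sup>2)"
    using choose_le by simp
  also have "\<dots> \<le> l * (20 * l)"
    using assms(3) by simp
  finally have "real (4 * n * rW31 W) \<le> real (l * (20 * l))"
    by (simp only: of_nat_le_iff)
  then have "real (rW31 W) \<le> 5 * real l ^ 2 / real n"
    using assms(1) by (simp add: field_simps power2_eq_square)
  then show ?thesis
    using r31_le[OF W(1)] W(2) by (meson of_nat_le_iff order.trans)
qed

lemma r31_lower_bound:
  assumes "W \<subseteq> V31 n" "0 < n" "6 * n\<^sup>2 \<le> card W"
  shows "4 * (real (card W) ^ 2 / real n) \<le> real (r31 n (card W))"
proof -
  let ?l = "real (card W)"
  obtain W' where W': "W' \<subseteq> V31 n" "card W' = card W" "r31 n (card W) = rW31 W'"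
    using r31_attained[OF assms(1)] .
  have "real (6 * n\<^sup>2) \<le> ?l"
    using assms(3) by (simp only: of_nat_le_iff)
  then have "6 * real n ^ 2 * ?l \<le> ?l * ?l"
    by (intro mult_right_mono) auto
  then have "6 * real n * ?l \<le> ?l ^ 2 / real n"
    using assms(2) by (simp add: field_simps power2_eq_square)
  moreover have "9 * ?l ^ 2 / real n \<le> 2 * real (r31 n (card W)) + 6 * real n * ?l"
    using rW31_lower_bound[OF W'(1) assms(2)] W'(2,3) by simp
  ultimately show ?thesis
    by (simp only: times_divide_eq_right[symmetric])
qed

lemma alpha31_ge_quarter:
  assumes "8 \<le> n"
  shows "real n \<le> 4 * real (alpha31 n)"
proof -
  have "n \<le> 4 * (n div 3)"
    using assms by linarith
  then show ?thesis
    using alpha31_ge[of n] by linarith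
qed

lemma r31_bounds:
  fixes n l :: nat
  assumes "200 \<le> n" "10000 * n\<^sup>2 \<le> l" "100000 * l \<le> n ^ 3"
  shows "real l ^ 2 / real (alpha31 n) \<le> real (r31 n l)"
    and "real (r31 n l) \<le> 5 * real l ^ 2 / real (alpha31 n)"
proof -
  obtain s where s: "l \<le> n div s * (s choose 3)" "3 * n * s\<^sup>2 \<le> 20 * l"
    using block_size_exists[OF assms] .
  obtain W where W: "W \<subseteq> V31 n" "card W = l"
    using rW31_block_family[OF s(1)] .
  have alpha: "real n \<le> 4 * real (alpha31 n)" "real (alpha31 n) \<le> real n" "0 < alpha31 n"
    using alpha31_ge_quarter[of n] alpha31_le[of n] assms(1) by simp_all
  have "real l ^ 2 / real (alpha31 n) \<le> real l ^ 2 / (real n / 4)"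
    using alpha by (intro divide_left_mono) auto
  also have "\<dots> = 4 * (real l ^ 2 / real n)"
    by simp
  also have "\<dots> \<le> real (r31 n l)"
    using r31_lower_bound[OF W(1)] W(2) assms(1,2) by simp
  finally show "real l ^ 2 / real (alpha31 n) \<le> real (r31 n l)" .
  have "real (r31 n l) \<le> 5 * real l ^ 2 / real n"
    using r31_upper_bound[OF _ s] assms(1) by simp
  also have "\<dots> \<le> 5 * real l ^ 2 / real (alpha31 n)"
    using alpha by (intro divide_left_mono) auto
  finally show "real (r31 n l) \<le> 5 * real l ^ 2 / real (alpha31 n)" .
qed

lemma real_le_square_div_alpha31:
  assumes "200 \<le> n" "10000 * n\<^sup>2 \<le> l"
  shows "real n \<le> real l ^ 2 / real (alpha31 n)"
proof -
  have "n \<le> l"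
    using le_square[of n] assms(2) unfolding power2_eq_square by linarith
  moreover have "0 < alpha31 n"
    using alpha31_ge[of n] assms(1) by linarith
  ultimately show ?thesis
    using alpha31_le[of n] by (simp add: pos_le_divide_eq power2_eq_square) (intro mult_mono; simp)
qed

section \<open>Asymptotics\<close>

lemma asymp_equiv_nat_ceiling:
  fixes X :: "'a \<Rightarrow> real"
  assumes "filterlim X at_top F"
  shows "(\<lambda>x. real (nat \<lceil>X x\<rceil>)) \<sim>[F] X"
proof (rule asymp_equiv_sandwich_real[where l = X and u = "\<lambda>x. X x + 1"])
  have "(\<lambda>_. 1) \<in> o[F](X)"
    using assms by (simp add: smallomega_iff_smallo[symmetric] smallomega_1_conv_filterlim
        filterlim_at_top_imp_at_infinity)
  then show "(\<lambda>x. X x + 1) \<sim>[F] X"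
    by (simp add: asymp_equiv_add_right)
  have "\<forall>\<^sub>F x in F. 0 \<le> X x"
    using assms by (simp add: filterlim_at_top)
  then show "\<forall>\<^sub>F x in F. real (nat \<lceil>X x\<rceil>) \<in> {X x..X x + 1}"
    by eventually_elim (use ceiling_correct in \<open>auto simp: of_nat_nat\<close>)
qed simp

lemma eventually_moderate_size:
  fixes f g l :: "nat \<Rightarrow> nat"
  assumes "(\<lambda>n. real n ^ 2) \<in> o(\<lambda>n. real (f n))" "(\<lambda>n. real (g n)) \<in> o(\<lambda>n. real n ^ 3)"
    and "\<And>n. f n \<le> l n \<and> l n \<le> g n"
  shows "\<forall>\<^sub>F n in at_top. 200 \<le> n \<and> 10000 * n\<^sup>2 \<le> l n \<and> 100000 * l n \<le> n ^ 3"
proof -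
  have "\<forall>\<^sub>F n in at_top. norm (real n ^ 2) \<le> 1 / 10000 * norm (real (f n))"
    by (rule landau_o.smallD[OF assms(1)]) simp
  moreover have "\<forall>\<^sub>F n in at_top. norm (real (g n)) \<le> 1 / 100000 * norm (real n ^ 3)"
    by (rule landau_o.smallD[OF assms(2)]) simp
  moreover have "\<forall>\<^sub>F n in at_top. (200::nat) \<le> n"
    by simp
  ultimately show ?thesis
  proof eventually_elim
    case (elim n)
    then have "real (10000 * n\<^sup>2) \<le> real (l n)" "real (100000 * l n) \<le> real (n ^ 3)"
      using assms(3)[of n] by (auto simp flip: of_nat_le_iff)
    then show ?case
      using elim(3) by (simp only: of_nat_le_iff)
  qed
qed

theorem theorem1:
  fixes f g l :: "nat \<Rightarrow> nat"
  assumes "(\<lambda>n. real n ^ 2) \<in> o(\<lambda>n. real (f n))"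
    and "(\<lambda>n. real (g n)) \<in> o(\<lambda>n. real n ^ 3)"
    and "\<And>n. f n \<le> l n \<and> l n \<le> g n"
  shows "\<exists>h :: nat \<Rightarrow> nat.
           (\<lambda>n. real (h n)) \<sim>[at_top] (\<lambda>n. 5 * real (l n) ^ 2 / real (alpha31 n)) \<and>
           (\<forall>\<^sub>F n in at_top.
              real (l n) ^ 2 / real (alpha31 n) \<le> real (r31 n (l n)) \<and>
              r31 n (l n) \<le> h n)"
proof -
  define X where "X n = 5 * real (l n) ^ 2 / real (alpha31 n)" for n
  have bounds: "\<forall>\<^sub>F n in at_top. real n \<le> X n \<and>
      real (l n) ^ 2 / real (alpha31 n) \<le> real (r31 n (l n)) \<and> real (r31 n (l n)) \<le> X n"
    using eventually_moderate_size[OF assms]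
    by eventually_elim (use r31_bounds real_le_square_div_alpha31 in \<open>fastforce simp: X_def\<close>)
  have "filterlim X at_top at_top"
    using bounds by (auto intro: filterlim_at_top_mono[OF filterlim_real_sequentially] elim: eventually_mono)
  then have "(\<lambda>n. real (nat \<lceil>X n\<rceil>)) \<sim>[at_top] X"
    by (rule asymp_equiv_nat_ceiling)
  moreover have "\<forall>\<^sub>F n in at_top. real (l n) ^ 2 / real (alpha31 n) \<le> real (r31 n (l n)) \<and>
      r31 n (l n) \<le> nat \<lceil>X n\<rceil>"
    using bounds by eventually_elim (auto simp: le_nat_iff le_ceiling_iff)
  ultimately show ?thesis
    unfolding X_def by (intro exI[where x = "\<lambda>n. nat \<lceil>X n\<rceil>"]) (simp add: X_def)
qed

end
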